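(* Let $\gamma\to_d\gamma'$ be a d-step. Then: (i) if the step is smooth, then $NS_\gamma(k)=NS_{\gamma'}(k)$ for every integer $k$; (ii) if the step is non-smooth, then with $k^*=\min\{\mathrm{rank}_\gamma(p,q) : (p,q)\in\mathrm{Edges},\ (p,q)\text{ non-smooth in }\gamma,\ \gamma'.p.d\ne\gamma.p.d \text{ or } \gamma'.q.d\neq\gamma.q.d\}$, we have (a) $NS_\gamma(k)=NS_{\gamma'}(k)$ for every integer $k<k^*$, and (b) $NS_{\gamma'}(k^* )\subsetneq NS_\gamma(k^* )$.
   Context: Let $G$ be a finite, connected, undirected graph with node set $V$ and a distinguished node $r$ (the root); $\mathrm{Edges}=\{(p,q)\in V\times V : p,q\text{ adjacent}\}$ (both orientations). Each node $p$ has a fixed ordered list $N(p)$ of its neighbours. A configuration $\gamma$ assigns to each node $p$ a value $\gamma.p.d\in\mathbb N$ and a neighbour $\gamma.p.par\in N(p)$. For a non-root $p$ let $Dist_p(\gamma)=\min\{\gamma.q.d+1 : q\in N(p)\}$. Algorithm BFS: Root enabled iff $\gamma.r.d\neq 0$, executing sets $r.d:=0$. Non-root $p$, action CD: enabled iff $\gamma.p.d\ne Dist_p(\gamma)$, executing sets $p.d:=Dist_p(\gamma)$. Non-root $p$, action CP: enabled iff $\gamma.p.d=Dist_p(\gamma)$ and $\gamma.q_0.d+1\neq\gamma.p.d$ with $q_0=\gamma.p.par$; executing sets $p.par$ to the first $q\in N(p)$ with $\gamma.q.d+1=\gamma.p.d$. A step $\gamma\to\gamma'$ holds iff a nonempty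 set $S$ of enabled nodes simultaneously execute their enabled action (evaluated in $\gamma$), others unchanged. A d-step $\gamma\to_d\gamma'$ is a step with $\gamma.r.d=\gamma'.r.d$ and $\gamma.p.d\neq\gamma'.p.d$ for some $p$. An edge $(p,q)$ is smooth in $\gamma$ if $|\gamma.p.d-\gamma.q.d|\le 1$, non-smooth otherwise. A d-step $\gamma\to_d\gamma'$ is smooth if every node $p$ with $\gamma'.p.d\neq\gamma.p.d$ has all its edges $(p,q)$, $q\in N(p)$, smooth in $\gamma$; otherwise it is non-smooth. $\mathrm{rank}_\gamma(p,q)=\min(\gamma.p.d,\gamma.q.d)$. $NS_\gamma(k)=\{e\in\mathrm{Edges} : e \text{ non-smooth in }\gamma,\ \mathrm{rank}_\gamma(e)=k\}$. *)

theory Defs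
  imports Main
begin

record 'v config =
  d :: "'v \<Rightarrow> nat"
  par :: "'v \<Rightarrow> 'v"

definition graph_edges :: "'v set \<Rightarrow> ('v \<Rightarrow> 'v list) \<Rightarrow> ('v \<times> 'v) set" where
  "graph_edges V N = {(p, q). p \<in> V \<and> q \<in> set (N p)}"

definition bfs_graph :: "'v set \<Rightarrow> ('v \<Rightarrow> 'v list) \<Rightarrow> 'v \<Rightarrow> bool" where
  "bfs_graph V N r \<longleftrightarrow>
     finite V \<and> r \<in> V \<and>
     (\<forall>p\<in>V. distinct (N p) \<and> set (N p) \<subseteq> V \<and> p \<notin> set (N p)) \<and>
     (\<forall>p\<in>V. \<forall>q\<in>V. q \<in> set (N p) \<longleftrightarrow> p \<in> set (N q)) \<and>
     (\<forall>p\<in>V. (r, p) \<in> (graph_edges V N)\<^sup>*)"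

definition valid_config :: "'v set \<Rightarrow> ('v \<Rightarrow> 'v list) \<Rightarrow> 'v config \<Rightarrow> bool" where
  "valid_config V N \<gamma> \<longleftrightarrow> (\<forall>p\<in>V. par \<gamma> p \<in> set (N p))"

definition Dist :: "('v \<Rightarrow> 'v list) \<Rightarrow> 'v config \<Rightarrow> 'v \<Rightarrow> nat" where
  "Dist N \<gamma> p = Min {d \<gamma> q + 1 | q. q \<in> set (N p)}"

definition enabled_CD :: "('v \<Rightarrow> 'v list) \<Rightarrow> 'v config \<Rightarrow> 'v \<Rightarrow> bool" where
  "enabled_CD N \<gamma> p \<longleftrightarrow> d \<gamma> p \<noteq> Dist N \<gamma> p"

definition enabled_CP :: "('v \<Rightarrow> 'v list) \<Rightarrow> 'v config \<Rightarrow> 'v \<Rightarrow> bool" where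
  "enabled_CP N \<gamma> p \<longleftrightarrow> d \<gamma> p = Dist N \<gamma> p \<and> d \<gamma> (par \<gamma> p) + 1 \<noteq> d \<gamma> p"

definition enabled :: "('v \<Rightarrow> 'v list) \<Rightarrow> 'v \<Rightarrow> 'v config \<Rightarrow> 'v \<Rightarrow> bool" where
  "enabled N r \<gamma> p \<longleftrightarrow>
     (if p = r then d \<gamma> r \<noteq> 0 else enabled_CD N \<gamma> p \<or> enabled_CP N \<gamma> p)"

definition exec :: "('v \<Rightarrow> 'v list) \<Rightarrow> 'v \<Rightarrow> 'v config \<Rightarrow> 'v \<Rightarrow> nat \<times> 'v" where
  "exec N r \<gamma> p =
     (if p = r then (0, par \<gamma> p)
      else if enabled_CD N \<gamma> p then (Dist N \<gamma> p, par \<gamma> p)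
      else (d \<gamma> p, the (find (\<lambda>q. d \<gamma> q + 1 = d \<gamma> p) (N p))))"

definition step :: "'v set \<Rightarrow> ('v \<Rightarrow> 'v list) \<Rightarrow> 'v \<Rightarrow> 'v config \<Rightarrow> 'v config \<Rightarrow> bool" where
  "step V N r \<gamma> \<gamma>' \<longleftrightarrow>
     (\<exists>S. S \<noteq> {} \<and> S \<subseteq> V \<and> (\<forall>p\<in>S. enabled N r \<gamma> p) \<and>
        (\<forall>p. if p \<in> S then (d \<gamma>' p, par \<gamma>' p) = exec N r \<gamma> p
              else d \<gamma>' p = d \<gamma> p \<and> par \<gamma>' p = par \<gamma> p))"

definition d_step :: "'v set \<Rightarrow> ('v \<Rightarrow> 'v list) \<Rightarrow> 'v \<Rightarrow> 'v config \<Rightarrow> 'v config \<Rightarrow> bool" where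
  "d_step V N r \<gamma> \<gamma>' \<longleftrightarrow>
     step V N r \<gamma> \<gamma>' \<and> d \<gamma> r = d \<gamma>' r \<and> (\<exists>p\<in>V. d \<gamma> p \<noteq> d \<gamma>' p)"

definition smooth_edge :: "'v config \<Rightarrow> 'v \<times> 'v \<Rightarrow> bool" where
  "smooth_edge \<gamma> e \<longleftrightarrow> (case e of (p, q) \<Rightarrow> d \<gamma> p \<le> d \<gamma> q + 1 \<and> d \<gamma> q \<le> d \<gamma> p + 1)"

definition smooth_d_step :: "('v \<Rightarrow> 'v list) \<Rightarrow> 'v set \<Rightarrow> 'v config \<Rightarrow> 'v config \<Rightarrow> bool" where
  "smooth_d_step N V \<gamma> \<gamma>' \<longleftrightarrow>
     (\<forall>p\<in>V. d \<gamma>' p \<noteq> d \<gamma> p \<longrightarrow> (\<forall>q\<in>set (N p). smooth_edge \<gamma> (p, q)))"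

definition rank :: "'v config \<Rightarrow> 'v \<times> 'v \<Rightarrow> nat" where
  "rank \<gamma> e = (case e of (p, q) \<Rightarrow> min (d \<gamma> p) (d \<gamma> q))"

definition NS :: "'v set \<Rightarrow> ('v \<Rightarrow> 'v list) \<Rightarrow> 'v config \<Rightarrow> int \<Rightarrow> ('v \<times> 'v) set" where
  "NS V N \<gamma> k = {e \<in> graph_edges V N. \<not> smooth_edge \<gamma> e \<and> int (rank \<gamma> e) = k}"

end

theory Submission
  imports Defs
begin

text \<open>A node that changes its d-value in a d-step moves to one more than the minimum of its
  neighbours' old values. If that creates a non-smooth edge, either the changed node was itself
  far from the neighbour realising the minimum, or it was already below that neighbour and the
  other endpoint of the edge was far above it; in both cases there was an old non-smooth edge of
  strictly smaller rank touching a changed node. Hence edges of rank below the least such rank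
  k* are untouched, and at rank k* the step can only remove non-smooth edges, and does remove
  the one attaining k*.\<close>

lemma sym_graph_edges:
  assumes "bfs_graph V N r"
  shows "sym (graph_edges V N)"
  using assms unfolding bfs_graph_def graph_edges_def sym_def by blast

lemma finite_graph_edges:
  assumes "bfs_graph V N r"
  shows "finite (graph_edges V N)"
proof -
  have "graph_edges V N \<subseteq> V \<times> V"
    using assms unfolding bfs_graph_def graph_edges_def by blast
  then show ?thesis
    using assms finite_subset unfolding bfs_graph_def by blast
qed

lemma neighbours_nonempty:
  assumes "bfs_graph V N r" and "p \<in> V" and "p \<noteq> r"
  shows "set (N p) \<noteq> {}"
proof -
  have "(r, p) \<in> (graph_edges V N)\<^sup>*"
    using assms(1,2) unfolding bfs_graph_def by blast
  then obtain q where "(q, p) \<in> graph_edges V N"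
    using assms(3) by (auto elim: rtranclE)
  then have "(p, q) \<in> graph_edges V N"
    by (rule symD[OF sym_graph_edges[OF assms(1)]])
  then show ?thesis
    unfolding graph_edges_def by auto
qed

lemma Dist_le:
  assumes "q \<in> set (N p)"
  shows "Dist N \<gamma> p \<le> d \<gamma> q + 1"
  using assms unfolding Dist_def by (intro Min_le) auto

lemma Dist_attained:
  assumes "set (N p) \<noteq> {}"
  obtains q where "q \<in> set (N p)" and "Dist N \<gamma> p = d \<gamma> q + 1"
proof -
  have "Dist N \<gamma> p = Min ((\<lambda>q. d \<gamma> q + 1) ` set (N p))"
    unfolding Dist_def by (simp add: setcompr_eq_image)
  also have "\<dots> \<in> (\<lambda>q. d \<gamma> q + 1) ` set (N p)"
    using assms by (intro Min_in) auto
  finally show ?thesis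
    using that by blast
qed

definition changes_to_Dist :: "'v set \<Rightarrow> ('v \<Rightarrow> 'v list) \<Rightarrow> 'v config \<Rightarrow> 'v config \<Rightarrow> bool" where
  "changes_to_Dist V N \<gamma> \<gamma>' \<longleftrightarrow>
     (\<forall>p. d \<gamma>' p \<noteq> d \<gamma> p \<longrightarrow> p \<in> V \<and> set (N p) \<noteq> {} \<and> d \<gamma>' p = Dist N \<gamma> p)"

lemma d_step_changes_to_Dist:
  assumes "bfs_graph V N r" and "d_step V N r \<gamma> \<gamma>'"
  shows "changes_to_Dist V N \<gamma> \<gamma>'"
  unfolding changes_to_Dist_def
proof (intro allI impI)
  fix p
  assume changed: "d \<gamma>' p \<noteq> d \<gamma> p"
  obtain S where "S \<subseteq> V"
    and S: "\<forall>p. if p \<in> S then (d \<gamma>' p, par \<gamma>' p) = exec N r \<gamma> p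
                 else d \<gamma>' p = d \<gamma> p \<and> par \<gamma>' p = par \<gamma> p"
    using assms(2) unfolding d_step_def step_def by blast
  have "p \<in> S"
    using S changed by metis
  then have "p \<in> V" and exec: "(d \<gamma>' p, par \<gamma>' p) = exec N r \<gamma> p"
    using S \<open>S \<subseteq> V\<close> by (metis subsetD)+
  moreover have "p \<noteq> r"
    using assms(2) changed unfolding d_step_def by auto
  moreover have "d \<gamma>' p = Dist N \<gamma> p"
    using exec changed \<open>p \<noteq> r\<close> unfolding exec_def by (auto split: if_splits)
  ultimately show "p \<in> V \<and> set (N p) \<noteq> {} \<and> d \<gamma>' p = Dist N \<gamma> p"
    using neighbours_nonempty[OF assms(1)] by blast
qed

definition touches_change :: "'v config \<Rightarrow> 'v config \<Rightarrow> 'v \<times> 'v \<Rightarrow> bool" where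
  "touches_change \<gamma> \<gamma>' e \<longleftrightarrow> (case e of (p, q) \<Rightarrow> d \<gamma>' p \<noteq> d \<gamma> p \<or> d \<gamma>' q \<noteq> d \<gamma> q)"

definition changed_nonsmooth_edges ::
    "'v set \<Rightarrow> ('v \<Rightarrow> 'v list) \<Rightarrow> 'v config \<Rightarrow> 'v config \<Rightarrow> ('v \<times> 'v) set" where
  "changed_nonsmooth_edges V N \<gamma> \<gamma>' =
     {e \<in> graph_edges V N. \<not> smooth_edge \<gamma> e \<and> touches_change \<gamma> \<gamma>' e}"

lemma smooth_rank_unchanged:
  assumes "\<not> touches_change \<gamma> \<gamma>' e"
  shows "smooth_edge \<gamma>' e = smooth_edge \<gamma> e" and "rank \<gamma>' e = rank \<gamma> e"
  using assms by (auto simp: touches_change_def smooth_edge_def rank_def split: prod.splits)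

lemma lower_changed_nonsmooth_edge_oriented:
  assumes sym: "sym (graph_edges V N)" and upd: "changes_to_Dist V N \<gamma> \<gamma>'"
    and pq: "(p, q) \<in> graph_edges V N" and gap: "d \<gamma>' p + 2 \<le> d \<gamma>' q"
    and touch: "touches_change \<gamma> \<gamma>' (p, q)"
  shows "\<exists>e \<in> changed_nonsmooth_edges V N \<gamma> \<gamma>'. rank \<gamma> e < d \<gamma>' p"
proof -
  have "p \<in> set (N q)"
    using symD[OF sym pq] unfolding graph_edges_def by simp
  then have q_bound: "d \<gamma>' q \<le> d \<gamma> p + 1" if "d \<gamma>' q \<noteq> d \<gamma> q"
    using upd that Dist_le unfolding changes_to_Dist_def by metis
  have p_changed: "d \<gamma>' p \<noteq> d \<gamma> p"
    using touch gap q_bound unfolding touches_change_def by force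
  then have "p \<in> V" "set (N p) \<noteq> {}" "d \<gamma>' p = Dist N \<gamma> p"
    using upd unfolding changes_to_Dist_def by blast+
  then obtain s where s: "s \<in> set (N p)" "d \<gamma>' p = d \<gamma> s + 1"
    by (metis Dist_attained)
  have ps: "(p, s) \<in> graph_edges V N"
    using \<open>p \<in> V\<close> s(1) unfolding graph_edges_def by simp
  show ?thesis
  proof (cases "d \<gamma> s + 2 \<le> d \<gamma> p")
    case True
    then show ?thesis
      using ps p_changed s(2)
      by (intro bexI[of _ "(p, s)"])
        (auto simp: changed_nonsmooth_edges_def touches_change_def smooth_edge_def rank_def)
  next
    case False
    then have "d \<gamma> p \<le> d \<gamma> s"
      using p_changed s(2) by linarith
    then have "d \<gamma>' q = d \<gamma> q"
      using q_bound gap s(2) by fastforce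
    then show ?thesis
      using pq p_changed gap s(2) \<open>d \<gamma> p \<le> d \<gamma> s\<close>
      by (intro bexI[of _ "(p, q)"])
        (auto simp: changed_nonsmooth_edges_def touches_change_def smooth_edge_def rank_def)
  qed
qed

lemma lower_changed_nonsmooth_edge:
  assumes sym: "sym (graph_edges V N)" and upd: "changes_to_Dist V N \<gamma> \<gamma>'"
    and e: "e \<in> graph_edges V N" "\<not> smooth_edge \<gamma>' e" "touches_change \<gamma> \<gamma>' e"
  shows "\<exists>e0 \<in> changed_nonsmooth_edges V N \<gamma> \<gamma>'. rank \<gamma> e0 < rank \<gamma>' e"
proof -
  obtain p q where e_def: "e = (p, q)"
    by fastforce
  show ?thesis
  proof (cases "d \<gamma>' p \<le> d \<gamma>' q")
    case True
    then have "d \<gamma>' p + 2 \<le> d \<gamma>' q"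
      using e(2) unfolding e_def smooth_edge_def by simp
    then show ?thesis
      using lower_changed_nonsmooth_edge_oriented[OF sym upd] e True
      unfolding e_def rank_def by simp
  next
    case False
    then have "d \<gamma>' q + 2 \<le> d \<gamma>' p"
      using e(2) unfolding e_def smooth_edge_def by simp
    moreover have "(q, p) \<in> graph_edges V N" "touches_change \<gamma> \<gamma>' (q, p)"
      using symD[OF sym] e unfolding e_def touches_change_def by auto
    ultimately show ?thesis
      using lower_changed_nonsmooth_edge_oriented[OF sym upd] False
      unfolding e_def rank_def by simp
  qed
qed

lemma NS_subset_NS_new:
  assumes "\<forall>e \<in> changed_nonsmooth_edges V N \<gamma> \<gamma>'. int (rank \<gamma> e) \<noteq> k"
  shows "NS V N \<gamma> k \<subseteq> NS V N \<gamma>' k"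
proof
  fix e
  assume e: "e \<in> NS V N \<gamma> k"
  then have "\<not> touches_change \<gamma> \<gamma>' e"
    using assms unfolding NS_def changed_nonsmooth_edges_def by blast
  then show "e \<in> NS V N \<gamma>' k"
    using e smooth_rank_unchanged[of \<gamma> \<gamma>' e] unfolding NS_def by simp
qed

lemma NS_new_subset_NS:
  assumes "sym (graph_edges V N)" and "changes_to_Dist V N \<gamma> \<gamma>'"
    and "\<forall>e \<in> changed_nonsmooth_edges V N \<gamma> \<gamma>'. k \<le> int (rank \<gamma> e)"
  shows "NS V N \<gamma>' k \<subseteq> NS V N \<gamma> k"
proof
  fix e
  assume e: "e \<in> NS V N \<gamma>' k"
  have "\<not> touches_change \<gamma> \<gamma>' e"
  proof
    assume "touches_change \<gamma> \<gamma>' e"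
    then obtain e0 where "e0 \<in> changed_nonsmooth_edges V N \<gamma> \<gamma>'" "rank \<gamma> e0 < rank \<gamma>' e"
      using lower_changed_nonsmooth_edge[OF assms(1,2)] e unfolding NS_def by blast
    then show False
      using assms(3) e unfolding NS_def by fastforce
  qed
  then show "e \<in> NS V N \<gamma> k"
    using e smooth_rank_unchanged[of \<gamma> \<gamma>' e] unfolding NS_def by simp
qed

lemma smooth_d_step_iff_no_changed_nonsmooth_edges:
  assumes "sym (graph_edges V N)"
  shows "smooth_d_step N V \<gamma> \<gamma>' \<longleftrightarrow> changed_nonsmooth_edges V N \<gamma> \<gamma>' = {}"
proof
  assume smooth: "smooth_d_step N V \<gamma> \<gamma>'"
  have "touches_change \<gamma> \<gamma>' (p, q) \<Longrightarrow> smooth_edge \<gamma> (p, q)"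
    if pq: "(p, q) \<in> graph_edges V N" for p q
  proof -
    have "(q, p) \<in> graph_edges V N"
      using symD[OF assms pq] .
    then show "touches_change \<gamma> \<gamma>' (p, q) \<Longrightarrow> smooth_edge \<gamma> (p, q)"
      using smooth pq
      unfolding smooth_d_step_def touches_change_def graph_edges_def smooth_edge_def by auto
  qed
  then show "changed_nonsmooth_edges V N \<gamma> \<gamma>' = {}"
    unfolding changed_nonsmooth_edges_def by auto
next
  assume "changed_nonsmooth_edges V N \<gamma> \<gamma>' = {}"
  then show "smooth_d_step N V \<gamma> \<gamma>'"
    unfolding changed_nonsmooth_edges_def smooth_d_step_def touches_change_def graph_edges_def
    by auto
qed

lemma NS_eq_below_changed_nonsmooth_ranks:
  assumes "sym (graph_edges V N)" and "changes_to_Dist V N \<gamma> \<gamma>'"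
    and "\<forall>e \<in> changed_nonsmooth_edges V N \<gamma> \<gamma>'. k < int (rank \<gamma> e)"
  shows "NS V N \<gamma> k = NS V N \<gamma>' k"
proof (rule subset_antisym)
  show "NS V N \<gamma> k \<subseteq> NS V N \<gamma>' k"
    using assms(3) by (intro NS_subset_NS_new) fastforce
  show "NS V N \<gamma>' k \<subseteq> NS V N \<gamma> k"
    using assms by (intro NS_new_subset_NS) fastforce+
qed

lemma NS_new_psubset_NS_at_Min_rank:
  fixes V N and \<gamma> \<gamma>' :: "'v config" and C
  defines "C \<equiv> changed_nonsmooth_edges V N \<gamma> \<gamma>'"
  assumes sym: "sym (graph_edges V N)" and upd: "changes_to_Dist V N \<gamma> \<gamma>'"
    and "finite C" and "C \<noteq> {}"
  shows "NS V N \<gamma>' (int (Min (rank \<gamma> ` C))) \<subset> NS V N \<gamma> (int (Min (rank \<gamma> ` C)))"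
proof -
  define K where "K = Min (rank \<gamma> ` C)"
  have "K \<in> rank \<gamma> ` C"
    unfolding K_def using \<open>finite C\<close> \<open>C \<noteq> {}\<close> by (intro Min_in) auto
  then obtain e0 where e0: "e0 \<in> C" "rank \<gamma> e0 = K"
    by blast
  have K_le: "\<forall>e \<in> C. int K \<le> int (rank \<gamma> e)"
    using Min_le[of "rank \<gamma> ` C"] \<open>finite C\<close> unfolding K_def by simp
  have "e0 \<in> NS V N \<gamma> (int K)"
    using e0 unfolding C_def NS_def changed_nonsmooth_edges_def by simp
  moreover have "e0 \<notin> NS V N \<gamma>' (int K)"
    using lower_changed_nonsmooth_edge[OF sym upd] e0 K_le
    unfolding C_def NS_def changed_nonsmooth_edges_def by fastforce
  ultimately show ?thesis
    using NS_new_subset_NS[OF sym upd] K_le unfolding C_def K_def by blast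
qed

theorem lemma7:
  fixes V :: "'v set" and N :: "'v \<Rightarrow> 'v list" and r :: 'v
    and \<gamma> \<gamma>' :: "'v config"
  assumes "bfs_graph V N r"
    and "valid_config V N \<gamma>"
    and "d_step V N r \<gamma> \<gamma>'"
  shows "(smooth_d_step N V \<gamma> \<gamma>' \<longrightarrow> (\<forall>k::int. NS V N \<gamma> k = NS V N \<gamma>' k))
       \<and> (\<not> smooth_d_step N V \<gamma> \<gamma>' \<longrightarrow>
           (let kstar = int (Min {rank \<gamma> (p, q) | p q. (p, q) \<in> graph_edges V N
                                   \<and> \<not> smooth_edge \<gamma> (p, q)
                                   \<and> (d \<gamma>' p \<noteq> d \<gamma> p \<or> d \<gamma>' q \<noteq> d \<gamma> q)})
            in (\<forall>k::int. k < kstar \<longrightarrow> NS V N \<gamma> k = NS V N \<gamma>' k)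
               \<and> NS V N \<gamma>' kstar \<subset> NS V N \<gamma> kstar))"
proof -
  let ?C = "changed_nonsmooth_edges V N \<gamma> \<gamma>'"
  have sym: "sym (graph_edges V N)"
    using sym_graph_edges[OF assms(1)] .
  have upd: "changes_to_Dist V N \<gamma> \<gamma>'"
    using d_step_changes_to_Dist[OF assms(1,3)] .
  have "finite ?C"
    using finite_graph_edges[OF assms(1)] unfolding changed_nonsmooth_edges_def by simp
  have kstar_set: "{rank \<gamma> (p, q) | p q. (p, q) \<in> graph_edges V N \<and> \<not> smooth_edge \<gamma> (p, q)
                   \<and> (d \<gamma>' p \<noteq> d \<gamma> p \<or> d \<gamma>' q \<noteq> d \<gamma> q)} = rank \<gamma> ` ?C"
    unfolding changed_nonsmooth_edges_def touches_change_def by force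
  have below_Min: "\<forall>e \<in> ?C. k < int (rank \<gamma> e)" if "k < int (Min (rank \<gamma> ` ?C))" for k
  proof
    fix e
    assume "e \<in> ?C"
    then have "Min (rank \<gamma> ` ?C) \<le> rank \<gamma> e"
      using \<open>finite ?C\<close> by (intro Min_le) auto
    with that show "k < int (rank \<gamma> e)"
      by linarith
  qed
  show ?thesis
    using smooth_d_step_iff_no_changed_nonsmooth_edges[OF sym] below_Min
      NS_eq_below_changed_nonsmooth_ranks[OF sym upd]
      NS_new_psubset_NS_at_Min_rank[OF sym upd \<open>finite ?C\<close>]
    unfolding kstar_set Let_def by simp
qed

end
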